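(* Let $m,m_P,m_W$ be positive integers and let $\eta^\infty=(\eta^\infty_{s,(x,\mu)})$ be a left stochastic matrix (nonnegative entries, each column summing to $1$) with row index $s\in\{1,\dots,m\}$ and column index $(x,\mu)\in\{-1,1\}^{m_W}\times\{0,1,\dots,m_P\}$, $x=(x_1,\dots,x_{m_W})$. Define the partition \[ S^P=\Big\{s:\sum_{x\in\{-1,1\}^{m_W}}\eta^\infty_{s,(x,0)}=0\Big\},\qquad S^W=\Big\{s:\sum_{x\in\{-1,1\}^{m_W}}\eta^\infty_{s,(x,0)}>0\Big\} \] of $\{1,\dots,m\}$. Then: (i) the numbers $\overline{\eta}_{s,\mu}=2^{-m_W}\sum_x\eta^\infty_{s,(x,\mu)}$, $(s,\mu)\in S^P\times\{1,\dots,m_P\}$, satisfy $0\le\overline{\eta}_{s,\mu}\le1$ for all such $(s,\mu)$ and $\sum_{s\in S^P}\overline{\eta}_{s,\mu}\le1$ for all $\mu\in\{1,\dots,m_P\}$; (ii) the singular values of the real matrix $E$ with entries \[ E_{s,\nu}=2^{-m_W/2}\,\frac{\sum_x x_{\nu-m_P}\,\eta^\infty_{s,(x,0)}}{\sqrt{\sum_x\eta^\infty_{s,(x,0)}}},\qquad (s,\nu)\in S^W\times\{m_P+1,\dots,m_P+m_W\}, \] all belong to $[0,1]$. *)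

theory Defs
  imports Complex_Main "Jordan_Normal_Form.Char_Poly"
begin

text \<open>Sign vectors x in {-1,1}^n, represented as real lists of length n;
  the paper's component x_i (1-based) is x ! (i - 1).\<close>
definition pm_vectors :: "nat \<Rightarrow> real list set" where
  "pm_vectors n = {xs. length xs = n \<and> set xs \<subseteq> {-1, 1}}"

definition singular_value :: "real mat \<Rightarrow> real \<Rightarrow> bool" where
  "singular_value E \<sigma> \<longleftrightarrow> \<sigma> \<ge> 0 \<and> eigenvalue (transpose_mat E * E) (\<sigma>\<^sup>2)"

end

theory Submission
  imports Defs
begin

text \<open>Part (i) just averages partial column sums of a stochastic matrix over the cube.
  For part (ii), put \<open>L x = (\<Sum>j. x\<^sub>j v\<^sub>j)\<close>. Row \<open>s\<close> of \<open>E v\<close> is \<open>2 powr (-mW/2)\<close> times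
  the \<open>\<eta>\<^sub>s\<close>-weighted sum of \<open>L\<close> over the square root of the total weight, so by
  Cauchy-Schwarz its square is at most \<open>2^-mW \<Sum>x. L(x)\<^sup>2 \<eta>\<^sub>s(x)\<close>. Summing over \<open>s\<close> and
  using that column sums are at most 1 gives \<open>\<parallel>E v\<parallel>\<^sup>2 \<le> 2^-mW \<Sum>x. L(x)\<^sup>2 = \<parallel>v\<parallel>\<^sup>2\<close>,
  the last equality because the coordinate functions are orthonormal on the cube.
  A contraction has all its singular values in [0,1].\<close>

lemma pm_vectors_0: "pm_vectors 0 = {[]}"
  by (auto simp: pm_vectors_def)

lemma pm_vectors_Suc:
  "pm_vectors (Suc n) = Cons (-1) ` pm_vectors n \<union> Cons 1 ` pm_vectors n"
proof -
  have "x \<in> pm_vectors (Suc n) \<longleftrightarrow> x \<in> Cons (-1) ` pm_vectors n \<union> Cons 1 ` pm_vectors n"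
    for x :: "real list"
    by (cases x) (auto simp: pm_vectors_def)
  then show ?thesis by blast
qed

lemma finite_pm_vectors: "finite (pm_vectors n)"
  by (induction n) (auto simp: pm_vectors_0 pm_vectors_Suc)

lemma sum_pm_vectors_Suc:
  "sum g (pm_vectors (Suc n)) = (\<Sum>xs\<in>pm_vectors n. g ((-1) # xs) + g (1 # xs))"
proof -
  have "Cons (-1) ` pm_vectors n \<inter> Cons (1::real) ` pm_vectors n = {}" by auto
  then show ?thesis
    unfolding pm_vectors_Suc
    by (subst sum.union_disjoint) (auto simp: finite_pm_vectors sum.reindex sum.distrib)
qed

lemma card_pm_vectors: "card (pm_vectors n) = 2 ^ n"
proof (induction n)
  case (Suc n)
  have "Cons (-1) ` pm_vectors n \<inter> Cons (1::real) ` pm_vectors n = {}" by auto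
  then have "card (pm_vectors (Suc n))
      = card (Cons (-1) ` pm_vectors n) + card (Cons (1::real) ` pm_vectors n)"
    unfolding pm_vectors_Suc by (intro card_Un_disjoint) (auto simp: finite_pm_vectors)
  then show ?case using Suc by (simp add: card_image)
qed (simp add: pm_vectors_0)

lemma sum_pm_vectors_linear_form_square:
  "(\<Sum>x\<in>pm_vectors n. (\<Sum>j<n. x ! j * v j)\<^sup>2) = 2 ^ n * (\<Sum>j<n. (v j)\<^sup>2)"
proof (induction n arbitrary: v)
  case 0
  show ?case by (simp add: pm_vectors_0)
next
  case (Suc n)
  have split: "(\<Sum>j<Suc n. (a # xs) ! j * v j) = a * v 0 + (\<Sum>j<n. xs ! j * v (Suc j))" for a xs
    by (subst sum.lessThan_Suc_shift) simp
  \<comment> \<open>the cross terms \<open>\<plusminus>2 v\<^sub>0 (\<dots>)\<close> of the two sign choices cancel\<close>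
  have "(\<Sum>x\<in>pm_vectors (Suc n). (\<Sum>j<Suc n. x ! j * v j)\<^sup>2)
      = (\<Sum>xs\<in>pm_vectors n. 2 * (v 0)\<^sup>2 + 2 * (\<Sum>j<n. xs ! j * v (Suc j))\<^sup>2)"
    unfolding sum_pm_vectors_Suc split by (simp add: power2_eq_square algebra_simps)
  also have "\<dots> = 2 * (v 0)\<^sup>2 * 2 ^ n + 2 * (2 ^ n * (\<Sum>j<n. (v (Suc j))\<^sup>2))"
    by (simp add: sum.distrib sum_distrib_left[symmetric] Suc[of "\<lambda>j. v (Suc j)"] card_pm_vectors)
  also have "\<dots> = 2 ^ Suc n * (\<Sum>j<Suc n. (v j)\<^sup>2)"
    by (subst sum.lessThan_Suc_shift) (simp add: algebra_simps)
  finally show ?case .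
qed

lemma weighted_mean_square_le:
  fixes f w :: "'a \<Rightarrow> real"
  assumes "finite A" "\<And>x. x \<in> A \<Longrightarrow> w x \<ge> 0" "(\<Sum>x\<in>A. w x) > 0"
  shows "(\<Sum>x\<in>A. f x * w x)\<^sup>2 / (\<Sum>x\<in>A. w x) \<le> (\<Sum>x\<in>A. (f x)\<^sup>2 * w x)"
proof -
  define W where "W = (\<Sum>x\<in>A. w x)"
  define a where "a = (\<Sum>x\<in>A. f x * w x)"
  define B where "B = (\<Sum>x\<in>A. (f x)\<^sup>2 * w x)"
  define t where "t = a / W"
  have "W > 0" using assms W_def by simp
  have "0 \<le> (\<Sum>x\<in>A. w x * (f x - t)\<^sup>2)" using assms by (intro sum_nonneg) auto
  also have "\<dots> = B - 2 * t * a + t\<^sup>2 * W"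
    unfolding B_def a_def W_def
    by (simp add: power2_eq_square algebra_simps sum.distrib sum_subtractf
        sum_distrib_left sum_distrib_right)
  also have "\<dots> = B - a\<^sup>2 / W" using \<open>W > 0\<close> unfolding t_def by (simp add: power2_eq_square field_simps)
  finally show ?thesis unfolding a_def B_def W_def by simp
qed

lemma singular_value_le_1_if_contraction:
  fixes E :: "real mat"
  assumes E: "E \<in> carrier_mat p q"
    and contraction: "\<And>v. v \<in> carrier_vec q \<Longrightarrow> (E *\<^sub>v v) \<bullet> (E *\<^sub>v v) \<le> v \<bullet> v"
    and "singular_value E \<sigma>"
  shows "\<sigma> \<le> 1"
proof -
  have "\<sigma> \<ge> 0" and "eigenvalue (transpose_mat E * E) (\<sigma>\<^sup>2)"
    using assms(3) unfolding singular_value_def by auto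
  then obtain v where v: "v \<in> carrier_vec q" "v \<noteq> 0\<^sub>v q"
    and ev: "(transpose_mat E * E) *\<^sub>v v = \<sigma>\<^sup>2 \<cdot>\<^sub>v v"
    unfolding eigenvalue_def eigenvector_def using E by auto
  have "\<sigma>\<^sup>2 * (v \<bullet> v) = (\<sigma>\<^sup>2 \<cdot>\<^sub>v v) \<bullet> v" using v by simp
  also have "\<dots> = (transpose_mat E *\<^sub>v (E *\<^sub>v v)) \<bullet> v"
    unfolding ev[symmetric] using E v by (subst assoc_mult_mat_vec[of _ q p _ q]) auto
  also have "\<dots> = (E *\<^sub>v v) \<bullet> (E *\<^sub>v v)"
    using E v by (simp add: transpose_vec_mult_scalar)
  also have "\<dots> \<le> 1 * (v \<bullet> v)" using contraction v by simp
  finally have "\<sigma>\<^sup>2 * (v \<bullet> v) \<le> 1 * (v \<bullet> v)" .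
  moreover have "v \<bullet> v > 0"
    using conjugate_square_greater_0_vec[OF v(1)] v(2) by simp
  ultimately have "\<sigma>\<^sup>2 \<le> 1" by (simp only: mult_le_cancel_right)
  then show ?thesis using \<open>\<sigma> \<ge> 0\<close> by (simp add: power_le_one_iff abs_square_le_1)
qed

lemma scalar_prod_self_mult_mat_vec_sorted_rows:
  fixes g :: "nat \<Rightarrow> nat \<Rightarrow> real" and S :: "nat set" and n :: nat
  defines "M \<equiv> mat (card S) n (\<lambda>(i, j). g (sorted_list_of_set S ! i) j)"
  assumes "finite S" "v \<in> carrier_vec n"
  shows "(M *\<^sub>v v) \<bullet> (M *\<^sub>v v) = (\<Sum>s\<in>S. (\<Sum>j<n. g s j * v $ j)\<^sup>2)"
proof -
  define sl where "sl = sorted_list_of_set S"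
  have sl: "distinct sl" "set sl = S" "length sl = card S"
    unfolding sl_def using \<open>finite S\<close> by auto
  have "(M *\<^sub>v v) \<bullet> (M *\<^sub>v v) = (\<Sum>i<card S. (\<Sum>j<n. g (sl ! i) j * v $ j)\<^sup>2)"
    using \<open>v \<in> carrier_vec n\<close>
    by (simp add: M_def sl_def scalar_prod_def power2_eq_square lessThan_atLeast0)
  also have "\<dots> = (\<Sum>s\<in>S. (\<Sum>j<n. g s j * v $ j)\<^sup>2)"
    using sum.reindex_bij_betw[OF bij_betw_nth[OF sl(1) refl sl(2)[symmetric]],
        of "\<lambda>s. (\<Sum>j<n. g s j * v $ j)\<^sup>2"]
    by (simp add: sl(3))
  finally show ?thesis .
qed

definition sign_correlation :: "nat \<Rightarrow> (real list \<Rightarrow> real) \<Rightarrow> nat \<Rightarrow> real" where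
  "sign_correlation n w j =
     2 powr (- real n / 2) * (\<Sum>x\<in>pm_vectors n. x ! j * w x) / sqrt (\<Sum>x\<in>pm_vectors n. w x)"

lemma sign_correlation_square_le:
  assumes "\<And>x. x \<in> pm_vectors n \<Longrightarrow> w x \<ge> 0" "(\<Sum>x\<in>pm_vectors n. w x) > 0"
  shows "(\<Sum>j<n. sign_correlation n w j * v j)\<^sup>2
           \<le> (\<Sum>x\<in>pm_vectors n. (\<Sum>j<n. x ! j * v j)\<^sup>2 * w x) / 2 ^ n"
proof -
  define c :: real where "c = 2 powr (- real n / 2)"
  define W where "W = (\<Sum>x\<in>pm_vectors n. w x)"
  define L where "L x = (\<Sum>j<n. x ! j * v j)" for x :: "real list"
  have c2: "c\<^sup>2 = 1 / 2 ^ n"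
  proof -
    have "c\<^sup>2 = 2 powr (- real n)"
      unfolding c_def power2_eq_square by (simp add: powr_add[symmetric])
    then show ?thesis by (simp add: powr_minus powr_realpow divide_inverse)
  qed
  have "(\<Sum>j<n. sign_correlation n w j * v j)
      = (\<Sum>j<n. c / sqrt W * (\<Sum>x\<in>pm_vectors n. x ! j * v j * w x))"
    unfolding sign_correlation_def c_def W_def
    by (intro sum.cong) (auto simp: sum_distrib_left sum_distrib_right sum_divide_distrib mult_ac)
  also have "\<dots> = c / sqrt W * (\<Sum>x\<in>pm_vectors n. L x * w x)"
    unfolding L_def sum_distrib_left[symmetric] sum_distrib_right
    by (simp add: sum.swap[of _ "{..<n}"])
  finally have "(\<Sum>j<n. sign_correlation n w j * v j)\<^sup>2
      = (c / sqrt W * (\<Sum>x\<in>pm_vectors n. L x * w x))\<^sup>2" by simp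
  also have "\<dots> = c\<^sup>2 * ((\<Sum>x\<in>pm_vectors n. L x * w x)\<^sup>2 / W)"
    using assms(2) W_def by (simp add: power_mult_distrib power_divide)
  also have "\<dots> \<le> c\<^sup>2 * (\<Sum>x\<in>pm_vectors n. (L x)\<^sup>2 * w x)"
    using weighted_mean_square_le[OF finite_pm_vectors, where f = L and w = w] assms unfolding W_def
    by (intro mult_left_mono) auto
  finally show ?thesis unfolding c2 L_def by simp
qed

lemma sign_correlation_mat_contraction:
  fixes eta :: "nat \<Rightarrow> real list \<Rightarrow> real" and S :: "nat set" and n :: nat
  defines "M \<equiv> mat (card S) n (\<lambda>(i, j). sign_correlation n (eta (sorted_list_of_set S ! i)) j)"
  assumes "finite S"
    and nonneg: "\<And>s x. s \<in> S \<Longrightarrow> x \<in> pm_vectors n \<Longrightarrow> eta s x \<ge> 0"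
    and pos: "\<And>s. s \<in> S \<Longrightarrow> (\<Sum>x\<in>pm_vectors n. eta s x) > 0"
    and column: "\<And>x. x \<in> pm_vectors n \<Longrightarrow> (\<Sum>s\<in>S. eta s x) \<le> 1"
    and v: "v \<in> carrier_vec n"
  shows "(M *\<^sub>v v) \<bullet> (M *\<^sub>v v) \<le> v \<bullet> v"
proof -
  define L where "L x = (\<Sum>j<n. x ! j * v $ j)" for x :: "real list"
  have "(M *\<^sub>v v) \<bullet> (M *\<^sub>v v) = (\<Sum>s\<in>S. (\<Sum>j<n. sign_correlation n (eta s) j * v $ j)\<^sup>2)"
    unfolding M_def using \<open>finite S\<close> v by (rule scalar_prod_self_mult_mat_vec_sorted_rows)
  also have "\<dots> \<le> (\<Sum>s\<in>S. (\<Sum>x\<in>pm_vectors n. (L x)\<^sup>2 * eta s x) / 2 ^ n)"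
    unfolding L_def using nonneg pos by (intro sum_mono sign_correlation_square_le) auto
  also have "\<dots> = (\<Sum>x\<in>pm_vectors n. (L x)\<^sup>2 * (\<Sum>s\<in>S. eta s x)) / 2 ^ n"
    by (simp add: sum_divide_distrib[symmetric] sum_distrib_left sum.swap[of _ S])
  also have "\<dots> \<le> (\<Sum>x\<in>pm_vectors n. (L x)\<^sup>2) / 2 ^ n"
    using column by (intro divide_right_mono sum_mono mult_left_le) auto
  also have "\<dots> = v \<bullet> v"
    using v unfolding L_def sum_pm_vectors_linear_form_square
    by (simp add: scalar_prod_def power2_eq_square lessThan_atLeast0)
  finally show ?thesis .
qed

lemma pm_vectors_average_le_1:
  fixes f :: "real list \<Rightarrow> real"
  assumes "\<And>x. x \<in> pm_vectors n \<Longrightarrow> f x \<le> 1"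
  shows "1 / 2 ^ n * (\<Sum>x\<in>pm_vectors n. f x) \<le> 1"
  using sum_bounded_above[of "pm_vectors n" f 1] assms by (simp add: card_pm_vectors)

lemma sum_pm_vectors_averages_le_1:
  fixes f :: "'a \<Rightarrow> real list \<Rightarrow> real"
  assumes "\<And>x. x \<in> pm_vectors n \<Longrightarrow> (\<Sum>s\<in>S. f s x) \<le> 1"
  shows "(\<Sum>s\<in>S. 1 / 2 ^ n * (\<Sum>x\<in>pm_vectors n. f s x)) \<le> 1"
proof -
  have "(\<Sum>s\<in>S. 1 / 2 ^ n * (\<Sum>x\<in>pm_vectors n. f s x))
      = 1 / 2 ^ n * (\<Sum>x\<in>pm_vectors n. \<Sum>s\<in>S. f s x)"
    by (simp add: sum_distrib_left sum.swap[of _ S])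
  also have "\<dots> \<le> 1" using assms by (rule pm_vectors_average_le_1)
  finally show ?thesis .
qed

theorem lemma1:
  fixes m mP mW :: nat
    and eta :: "nat \<Rightarrow> real list \<times> nat \<Rightarrow> real"
    and SP SW :: "nat set"
    and etabar :: "nat \<Rightarrow> nat \<Rightarrow> real"
    and E :: "real mat"
  assumes "m > 0" "mP > 0" "mW > 0"
    and nonneg: "\<And>s x \<mu>. s \<in> {1..m} \<Longrightarrow> x \<in> pm_vectors mW \<Longrightarrow> \<mu> \<in> {0..mP} \<Longrightarrow> eta s (x, \<mu>) \<ge> 0"
    and colsum: "\<And>x \<mu>. x \<in> pm_vectors mW \<Longrightarrow> \<mu> \<in> {0..mP} \<Longrightarrow> (\<Sum>s=1..m. eta s (x, \<mu>)) = 1"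
    and SP_def: "SP = {s \<in> {1..m}. (\<Sum>x\<in>pm_vectors mW. eta s (x, 0)) = 0}"
    and SW_def: "SW = {s \<in> {1..m}. (\<Sum>x\<in>pm_vectors mW. eta s (x, 0)) > 0}"
    and etabar_def: "\<And>s \<mu>. etabar s \<mu> = (1 / 2 ^ mW) * (\<Sum>x\<in>pm_vectors mW. eta s (x, \<mu>))"
    and E_def: "E = mat (card SW) mW (\<lambda>(i, j).
          (let s = sorted_list_of_set SW ! i; \<nu> = mP + 1 + j in
            2 powr (- real mW / 2) *
            (\<Sum>x\<in>pm_vectors mW. x ! (\<nu> - mP - 1) * eta s (x, 0))
            / sqrt (\<Sum>x\<in>pm_vectors mW. eta s (x, 0))))"
  shows "(\<forall>s\<in>SP. \<forall>\<mu>\<in>{1..mP}. 0 \<le> etabar s \<mu> \<and> etabar s \<mu> \<le> 1)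
       \<and> (\<forall>\<mu>\<in>{1..mP}. (\<Sum>s\<in>SP. etabar s \<mu>) \<le> 1)
       \<and> (\<forall>\<sigma>. singular_value E \<sigma> \<longrightarrow> 0 \<le> \<sigma> \<and> \<sigma> \<le> 1)"
proof -
  let ?P = "pm_vectors mW"
  have partial_column: "(\<Sum>s\<in>A. eta s (x, \<mu>)) \<le> 1"
    if "A \<subseteq> {1..m}" "x \<in> ?P" "\<mu> \<in> {0..mP}" for A x \<mu>
    using sum_mono2[of "{1..m}" A "\<lambda>s. eta s (x, \<mu>)"] that nonneg colsum by force
  have SP: "SP \<subseteq> {1..m}" and SW: "SW \<subseteq> {1..m}" using SP_def SW_def by auto
  have "0 \<le> etabar s \<mu> \<and> etabar s \<mu> \<le> 1" if "s \<in> SP" "\<mu> \<in> {1..mP}" for s \<mu>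
  proof -
    have "s \<in> {1..m}" "\<mu> \<in> {0..mP}" using that SP by auto
    then show ?thesis
      unfolding etabar_def using nonneg partial_column[of "{s}"]
      by (intro conjI mult_nonneg_nonneg sum_nonneg pm_vectors_average_le_1) auto
  qed
  moreover have "(\<Sum>s\<in>SP. etabar s \<mu>) \<le> 1" if "\<mu> \<in> {1..mP}" for \<mu>
    unfolding etabar_def using that SP partial_column
    by (intro sum_pm_vectors_averages_le_1) auto
  moreover have "\<sigma> \<le> 1" if "singular_value E \<sigma>" for \<sigma>
  proof (rule singular_value_le_1_if_contraction[OF _ _ that])
    have E: "E = mat (card SW) mW (\<lambda>(i, j).
        sign_correlation mW (\<lambda>x. eta (sorted_list_of_set SW ! i) (x, 0)) j)"
      unfolding E_def sign_correlation_def by (simp add: Let_def)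
    show "E \<in> carrier_mat (card SW) mW" unfolding E by simp
    show "(E *\<^sub>v v) \<bullet> (E *\<^sub>v v) \<le> v \<bullet> v" if "v \<in> carrier_vec mW" for v
      unfolding E using that SW finite_subset[OF SW] nonneg SW_def partial_column[OF SW]
      by (intro sign_correlation_mat_contraction) auto
  qed
  ultimately show ?thesis unfolding singular_value_def by auto
qed

end
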